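(* Fix $(t,\mathbf x)\in\mathbf D^0$ at which the quantities $\lambda,\mu,\widetilde{\boldsymbol\zeta},\widetilde g$ below are well defined. If the vectors $\mathbf c(t,\mathbf x)$ and $\mathbf v(t,\mathbf x)$ are collinear (i.e. $\mathbf v(t,\mathbf x)=k\,\mathbf c(t,\mathbf x)$ for some $k\in\mathbb R$), then $\widetilde g(t,\mathbf x)=0$.
   Context: Let $\mathbf G=\mathbb R_+\times\mathbb R\times\mathbb R_+$, $\mathbf D^0=(0,T)\times\mathbf G\times\mathbb R_+$ with generic point $(t,\mathbf x)$, $\mathbf x=(S,A,M,\Sigma)$. Let $\mathcal C(t,S,\Sigma)$ (Black–Scholes value of a traded option) and $\mathcal V(t,S,A,M,\Sigma)$ (Black–Scholes value of a non-traded option) be sufficiently differentiable functions, and $\beta,\gamma$ real functions of $(t,S,A,M)$. Define $\Gamma=\mathcal V_{SS}+2\gamma\mathcal V_{SA}+\gamma^2\mathcal V_{AA}$, $\frac{\partial\Delta}{\partial\Sigma}:=\mathcal V_{S\Sigma}+\gamma\mathcal V_{A\Sigma}$, the vega-gamma-vanna-volga vectors $\mathbf c=(\mathcal C_\Sigma,\Sigma S^2\mathcal C_{SS},\Sigma S\mathcal C_{S\Sigma},\frac12\mathcal C_{\Sigma\Sigma})^\top$ and $\mathbf v=(\mathcal V_\Sigma,\Sigma(\beta\mathcal V_A+S^2\Gamma),\Sigma S\frac{\partial\Delta}{\partial\Sigma},\frac12\mathcal V_{\Sigma\Sigma})^\top$. Fix $\psi_\nu,\psi_\sigma,\psi_\eta,\psi_\xi>0$,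 $\Psi=\mathrm{diag}(\psi_\nu,\psi_\sigma,\psi_\eta,\psi_\xi)$. Let $\lambda=\frac{\mathbf c^\top\Psi\mathbf v}{\mathbf c^\top\Psi\mathbf c}$ if $\mathcal V_{\Sigma\Sigma}-\frac{\mathbf c^\top\Psi\mathbf v}{\mathbf c^\top\Psi\mathbf c}\mathcal C_{\Sigma\Sigma}\ge0$ and $\lambda=\frac{\mathbf c^\top\Psi\mathbf v-\frac14\mathcal C_{\Sigma\Sigma}\mathcal V_{\Sigma\Sigma}\psi_\xi}{\mathbf c^\top\Psi\mathbf c-\frac14\mathcal C_{\Sigma\Sigma}^2\psi_\xi}$ otherwise; $\mu=\frac12(\mathcal V_{\Sigma\Sigma}-\lambda\mathcal C_{\Sigma\Sigma})^-$ where $x^-=\max(-x,0)$; $\widetilde{\boldsymbol\zeta}=\Psi(\mathbf v-\lambda\mathbf c+\mu\mathbf e_4)$ with $\mathbf e_4$ the fourth unit vector; and $\widetilde g=\mathbf v^\top\widetilde{\boldsymbol\zeta}$. All functions are evaluated at $(t,\mathbf x)$. *)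

theory Defs
  imports "HOL-Analysis.Analysis"
begin

definition C_Sig :: "(real \<Rightarrow> real \<Rightarrow> real \<Rightarrow> real) \<Rightarrow> real \<Rightarrow> real \<Rightarrow> real \<Rightarrow> real" where
  "C_Sig C t S Sg = deriv (\<lambda>s. C t S s) Sg"
definition C_SS :: "(real \<Rightarrow> real \<Rightarrow> real \<Rightarrow> real) \<Rightarrow> real \<Rightarrow> real \<Rightarrow> real \<Rightarrow> real" where
  "C_SS C t S Sg = deriv (\<lambda>x. deriv (\<lambda>y. C t y Sg) x) S"
definition C_SSig :: "(real \<Rightarrow> real \<Rightarrow> real \<Rightarrow> real) \<Rightarrow> real \<Rightarrow> real \<Rightarrow> real \<Rightarrow> real" where
  "C_SSig C t S Sg = deriv (\<lambda>s. deriv (\<lambda>y. C t y s) S) Sg"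
definition C_SigSig :: "(real \<Rightarrow> real \<Rightarrow> real \<Rightarrow> real) \<Rightarrow> real \<Rightarrow> real \<Rightarrow> real \<Rightarrow> real" where
  "C_SigSig C t S Sg = deriv (\<lambda>s. deriv (\<lambda>r. C t S r) s) Sg"

type_synonym vfun = "real \<Rightarrow> real \<Rightarrow> real \<Rightarrow> real \<Rightarrow> real \<Rightarrow> real"

definition V_Sig :: "vfun \<Rightarrow> real \<Rightarrow> real \<Rightarrow> real \<Rightarrow> real \<Rightarrow> real \<Rightarrow> real" where
  "V_Sig V t S A M Sg = deriv (\<lambda>s. V t S A M s) Sg"
definition V_A :: "vfun \<Rightarrow> real \<Rightarrow> real \<Rightarrow> real \<Rightarrow> real \<Rightarrow> real \<Rightarrow> real" where
  "V_A V t S A M Sg = deriv (\<lambda>a. V t S a M Sg) A"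
definition V_SS :: "vfun \<Rightarrow> real \<Rightarrow> real \<Rightarrow> real \<Rightarrow> real \<Rightarrow> real \<Rightarrow> real" where
  "V_SS V t S A M Sg = deriv (\<lambda>x. deriv (\<lambda>y. V t y A M Sg) x) S"
definition V_SA :: "vfun \<Rightarrow> real \<Rightarrow> real \<Rightarrow> real \<Rightarrow> real \<Rightarrow> real \<Rightarrow> real" where
  "V_SA V t S A M Sg = deriv (\<lambda>a. deriv (\<lambda>y. V t y a M Sg) S) A"
definition V_AA :: "vfun \<Rightarrow> real \<Rightarrow> real \<Rightarrow> real \<Rightarrow> real \<Rightarrow> real \<Rightarrow> real" where
  "V_AA V t S A M Sg = deriv (\<lambda>x. deriv (\<lambda>a. V t S a M Sg) x) A"
definition V_SSig :: "vfun \<Rightarrow> real \<Rightarrow> real \<Rightarrow> real \<Rightarrow> real \<Rightarrow> real \<Rightarrow> real" where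
  "V_SSig V t S A M Sg = deriv (\<lambda>s. deriv (\<lambda>y. V t y A M s) S) Sg"
definition V_ASig :: "vfun \<Rightarrow> real \<Rightarrow> real \<Rightarrow> real \<Rightarrow> real \<Rightarrow> real \<Rightarrow> real" where
  "V_ASig V t S A M Sg = deriv (\<lambda>s. deriv (\<lambda>a. V t S a M s) A) Sg"
definition V_SigSig :: "vfun \<Rightarrow> real \<Rightarrow> real \<Rightarrow> real \<Rightarrow> real \<Rightarrow> real \<Rightarrow> real" where
  "V_SigSig V t S A M Sg = deriv (\<lambda>s. deriv (\<lambda>r. V t S A M r) s) Sg"

definition Gam :: "vfun \<Rightarrow> (real \<Rightarrow> real \<Rightarrow> real \<Rightarrow> real \<Rightarrow> real) \<Rightarrow> real \<Rightarrow> real \<Rightarrow> real \<Rightarrow> real \<Rightarrow> real \<Rightarrow> real" where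
  "Gam V \<gamma> t S A M Sg = V_SS V t S A M Sg + 2 * \<gamma> t S A M * V_SA V t S A M Sg
      + (\<gamma> t S A M)\<^sup>2 * V_AA V t S A M Sg"
definition dDelta_dSig :: "vfun \<Rightarrow> (real \<Rightarrow> real \<Rightarrow> real \<Rightarrow> real \<Rightarrow> real) \<Rightarrow> real \<Rightarrow> real \<Rightarrow> real \<Rightarrow> real \<Rightarrow> real \<Rightarrow> real" where
  "dDelta_dSig V \<gamma> t S A M Sg = V_SSig V t S A M Sg + \<gamma> t S A M * V_ASig V t S A M Sg"

definition cvec :: "(real \<Rightarrow> real \<Rightarrow> real \<Rightarrow> real) \<Rightarrow> real \<Rightarrow> real \<Rightarrow> real \<Rightarrow> real^4" where
  "cvec C t S Sg = vector [C_Sig C t S Sg, Sg * S\<^sup>2 * C_SS C t S Sg,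
      Sg * S * C_SSig C t S Sg, 1/2 * C_SigSig C t S Sg]"

definition vvec :: "vfun \<Rightarrow> (real \<Rightarrow> real \<Rightarrow> real \<Rightarrow> real \<Rightarrow> real) \<Rightarrow> (real \<Rightarrow> real \<Rightarrow> real \<Rightarrow> real \<Rightarrow> real)
    \<Rightarrow> real \<Rightarrow> real \<Rightarrow> real \<Rightarrow> real \<Rightarrow> real \<Rightarrow> real^4" where
  "vvec V \<beta> \<gamma> t S A M Sg = vector [V_Sig V t S A M Sg,
      Sg * (\<beta> t S A M * V_A V t S A M Sg + S\<^sup>2 * Gam V \<gamma> t S A M Sg),
      Sg * S * dDelta_dSig V \<gamma> t S A M Sg,
      1/2 * V_SigSig V t S A M Sg]"

definition diagm :: "real^4 \<Rightarrow> real^4^4" where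
  "diagm p = (\<chi> i j. if i = j then p $ i else 0)"

definition e4 :: "real^4" where "e4 = vector [0, 0, 0, 1]"

definition lam :: "real^4 \<Rightarrow> real \<Rightarrow> real^4 \<Rightarrow> real^4 \<Rightarrow> real \<Rightarrow> real \<Rightarrow> real" where
  "lam p psi_xi c v Css Vss =
     (let r = (c \<bullet> (diagm p *v v)) / (c \<bullet> (diagm p *v c)) in
      if Vss - r * Css \<ge> 0 then r
      else (c \<bullet> (diagm p *v v) - 1/4 * Css * Vss * psi_xi)
           / (c \<bullet> (diagm p *v c) - 1/4 * Css\<^sup>2 * psi_xi))"

definition neg_part :: "real \<Rightarrow> real" where "neg_part x = max (- x) 0"

definition mu :: "real \<Rightarrow> real \<Rightarrow> real \<Rightarrow> real" where
  "mu l Css Vss = 1/2 * neg_part (Vss - l * Css)"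

definition zeta_tilde :: "real^4 \<Rightarrow> real^4 \<Rightarrow> real^4 \<Rightarrow> real \<Rightarrow> real \<Rightarrow> real^4" where
  "zeta_tilde p c v l m = diagm p *v (v - l *\<^sub>R c + m *\<^sub>R e4)"

definition g_tilde :: "real^4 \<Rightarrow> real^4 \<Rightarrow> real^4 \<Rightarrow> real \<Rightarrow> real \<Rightarrow> real" where
  "g_tilde p c v l m = v \<bullet> zeta_tilde p c v l m"

end

theory Submission
  imports Defs
begin

text \<open>If \<open>v = k c\<close>, then \<open>V\<^sub>\<Sigma>\<^sub>\<Sigma> = k C\<^sub>\<Sigma>\<^sub>\<Sigma>\<close> (fourth components), so the first branch of \<open>\<lambda>\<close> applies
  and gives \<open>\<lambda> = k\<close>; then \<open>\<mu> = 0\<close> and \<open>\<zeta>\<close> is \<open>\<Psi>\<close> applied to \<open>v - k c = 0\<close>.\<close>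

lemma vector_4_nth_4: "(vector [x, y, z, w] :: 'a::zero^4) $ 4 = w"
  unfolding vector_def by simp

lemma cvec_nth_4: "cvec C t S Sg $ 4 = 1/2 * C_SigSig C t S Sg"
  unfolding cvec_def by (simp add: vector_4_nth_4)

lemma vvec_nth_4: "vvec V \<beta> \<gamma> t S A M Sg $ 4 = 1/2 * V_SigSig V t S A M Sg"
  unfolding vvec_def by (simp add: vector_4_nth_4)

lemma lam_scaleR:
  assumes "c \<bullet> (diagm p *v c) \<noteq> 0"
  shows "lam p \<psi> c (k *\<^sub>R c) Css (k * Css) = k"
proof -
  have "(c \<bullet> (diagm p *v (k *\<^sub>R c))) / (c \<bullet> (diagm p *v c)) = k"
    using assms by (simp add: matrix_vector_mult_scaleR)
  then show ?thesis
    unfolding lam_def Let_def by simp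
qed

lemma mu_scaled: "mu k Css (k * Css) = 0"
  unfolding mu_def neg_part_def by simp

lemma g_tilde_scaleR: "g_tilde p c (k *\<^sub>R c) k 0 = 0"
  unfolding g_tilde_def zeta_tilde_def by simp

theorem proposition4p7:
  fixes C :: "real \<Rightarrow> real \<Rightarrow> real \<Rightarrow> real"
    and V :: "real \<Rightarrow> real \<Rightarrow> real \<Rightarrow> real \<Rightarrow> real \<Rightarrow> real"
    and \<beta> \<gamma> :: "real \<Rightarrow> real \<Rightarrow> real \<Rightarrow> real \<Rightarrow> real"
    and T t S A M Sg \<psi>\<^sub>\<nu> \<psi>\<^sub>\<sigma> \<psi>\<^sub>\<eta> \<psi>\<^sub>\<xi> :: real
  assumes psi_pos: "\<psi>\<^sub>\<nu> > 0" "\<psi>\<^sub>\<sigma> > 0" "\<psi>\<^sub>\<eta> > 0" "\<psi>\<^sub>\<xi> > 0"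
    and dom: "0 < t" "t < T" "S > 0" "M > 0" "Sg > 0"
  defines "p \<equiv> vector [\<psi>\<^sub>\<nu>, \<psi>\<^sub>\<sigma>, \<psi>\<^sub>\<eta>, \<psi>\<^sub>\<xi>] :: real^4"
    and "c \<equiv> cvec C t S Sg"
    and "v \<equiv> vvec V \<beta> \<gamma> t S A M Sg"
    and "Css \<equiv> C_SigSig C t S Sg"
    and "Vss \<equiv> V_SigSig V t S A M Sg"
  assumes welldef1: "c \<bullet> (diagm p *v c) \<noteq> 0"
    and welldef2: "V_SigSig V t S A M Sg - (c \<bullet> (diagm p *v v)) / (c \<bullet> (diagm p *v c)) * Css < 0
                   \<Longrightarrow> c \<bullet> (diagm p *v c) - 1/4 * Css\<^sup>2 * \<psi>\<^sub>\<xi> \<noteq> 0"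
    and collinear: "\<exists>k::real. v = k *\<^sub>R c"
  shows "g_tilde p c v (lam p \<psi>\<^sub>\<xi> c v Css Vss) (mu (lam p \<psi>\<^sub>\<xi> c v Css Vss) Css Vss) = 0"
proof -
  obtain k where v_eq: "v = k *\<^sub>R c"
    using collinear by blast
  have "1/2 * Vss = k * (1/2 * Css)"
    using arg_cong[OF v_eq, of "\<lambda>x. x $ 4"]
    unfolding v_def c_def Vss_def Css_def by (simp add: cvec_nth_4 vvec_nth_4)
  then have Vss_eq: "Vss = k * Css"
    by simp
  have lam_eq: "lam p \<psi>\<^sub>\<xi> c v Css Vss = k"
    unfolding v_eq Vss_eq using welldef1 by (rule lam_scaleR)
  show ?thesis
    unfolding lam_eq unfolding Vss_eq mu_scaled v_eq by (rule g_tilde_scaleR)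
qed

end
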